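(* Let $\mathfrak{g}$ be a finite-dimensional real Lie algebra and let $((\Lambda^3\mathfrak{g})^{\mathfrak{g}})^\circ\subset(\Lambda^3\mathfrak{g})^*$ be the annihilator of $(\Lambda^3\mathfrak{g})^{\mathfrak{g}}$. The functions $f_\upsilon:r\in\Lambda^2\mathfrak{g}\mapsto\upsilon([r,r])\in\mathbb{R}$, $\upsilon\in((\Lambda^3\mathfrak{g})^{\mathfrak{g}})^\circ$, span a linear Darboux family for $V_{\mathfrak{g}}$ on $\Lambda^2\mathfrak{g}$ whose locus is the set $\mathcal{Y}_{\mathfrak{g}}$ of solutions of the modified classical Yang–Baxter equation. Moreover, the functions $r\mapsto\xi([r,r])$, $\xi\in(\Lambda^3\mathfrak{g})^*$ (i.e. the components of $[r,r]$ in any basis of $\Lambda^3\mathfrak{g}$), span a linear Darboux family for $V_{\mathfrak{g}}$ on $\Lambda^2\mathfrak{g}$ whose locus is the set of solutions of the classical Yang–Baxter equation $[r,r]=0$.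
   Context: $[\cdot,\cdot]$ is the algebraic Schouten bracket on $\Lambda\mathfrak{g}$. $(\Lambda^m\mathfrak{g})^{\mathfrak{g}}=\{w\in\Lambda^m\mathfrak{g}:[v,w]=0\ \forall v\in\mathfrak{g}\}$. The modified classical Yang–Baxter equation (mCYBE) for $r\in\Lambda^2\mathfrak{g}$ is $[r,r]\in(\Lambda^3\mathfrak{g})^{\mathfrak{g}}$; its solutions are called $r$-matrices and form $\mathcal{Y}_{\mathfrak{g}}$. $V_{\mathfrak{g}}$ is the Lie algebra of fundamental vector fields of the action $T\mapsto\Lambda^2T$ of $\mathrm{Aut}(\mathfrak{g})$ on $\Lambda^2\mathfrak{g}$, namely $w\mapsto(\Lambda^2d)(w)$ for $d\in\mathfrak{der}(\mathfrak{g})$, where $\Lambda^2d(a\wedge b)=da\wedge b+a\wedge db$. A Darboux family for a Lie algebra $V$ of vector fields on $M$ is a finite-dimensional space $\mathcal{A}=\langle f_1,\dots,f_s\rangle$ of smooth functions with $Xf_j=\sum_i h^i_{jX}f_i$, $h^i_{jX}\in C^\infty(M)$, for all $X\in V$; it is linear if the cofactors can be taken constant; its locus is the common zero set of its elements. *)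

theory Defs
  imports "HOL-Analysis.Analysis"
begin

text \<open>A finite-dimensional real Lie algebra is modelled as real^'n (standard basis
 axis i 1 = e_i) with a bilinear, antisymmetric bracket satisfying Jacobi.\<close>

definition lie_algebra :: "(real^'n \<Rightarrow> real^'n \<Rightarrow> real^'n) \<Rightarrow> bool" where
  "lie_algebra br \<longleftrightarrow> bilinear br \<and> (\<forall>x y. br x y = - br y x) \<and>
     (\<forall>x y z. br x (br y z) + br y (br z x) + br z (br x y) = 0)"

definition sc :: "(real^'n \<Rightarrow> real^'n \<Rightarrow> real^'n) \<Rightarrow> 'n \<Rightarrow> 'n \<Rightarrow> 'n \<Rightarrow> real" where
  "sc br i j k = br (axis i 1) (axis j 1) $ k"

text \<open>r = sum_{i<j} r$i$j e_i\<and>e_j  and  w = sum_{a<b<c} w$a$b$c e_a\<and>e_b\<and>e_c,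
 with antisymmetric coefficient tensors.\<close>

definition Lam2 :: "(real^'n^'n) set" where
  "Lam2 = {r. \<forall>i j. r$i$j = - r$j$i}"

definition Lam3 :: "(real^'n^'n^'n) set" where
  "Lam3 = {w. \<forall>a b c. w$a$b$c = - w$b$a$c \<and> w$a$b$c = - w$a$c$b}"

text \<open>Algebraic Schouten bracket [r,r] of a bivector with itself (convention
 [x\<and>y,u\<and>v] = [x,u]\<and>y\<and>v - [x,v]\<and>y\<and>u - [y,u]\<and>x\<and>v + [y,v]\<and>x\<and>u),
 which gives [r,r] = sum_{i,j,k,l} r^{ij} r^{kl} [e_i,e_k]\<and>e_j\<and>e_l.\<close>

definition schouten_pre :: "(real^'n \<Rightarrow> real^'n \<Rightarrow> real^'n) \<Rightarrow> real^'n^'n \<Rightarrow> 'n \<Rightarrow> 'n \<Rightarrow> 'n \<Rightarrow> real" where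
  "schouten_pre br r m j l = (\<Sum>i\<in>UNIV. \<Sum>k\<in>UNIV. sc br i k m * r$i$j * r$k$l)"

definition schouten_rr :: "(real^'n \<Rightarrow> real^'n \<Rightarrow> real^'n) \<Rightarrow> real^'n^'n \<Rightarrow> real^'n^'n^'n" where
  "schouten_rr br r = (\<chi> a b c. schouten_pre br r a b c - schouten_pre br r b a c
      - schouten_pre br r a c b - schouten_pre br r c b a
      + schouten_pre br r b c a + schouten_pre br r c a b)"

text \<open>Schouten bracket [v,w] of v in g with w in Lam^3 g (adjoint action, a derivation).\<close>

definition schouten_13 :: "(real^'n \<Rightarrow> real^'n \<Rightarrow> real^'n) \<Rightarrow> real^'n \<Rightarrow> real^'n^'n^'n \<Rightarrow> real^'n^'n^'n" where
  "schouten_13 br v w = (\<chi> a b c. \<Sum>d\<in>UNIV.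
       br v (axis d 1) $ a * w$d$b$c + br v (axis d 1) $ b * w$a$d$c + br v (axis d 1) $ c * w$a$b$d)"

definition inv3 :: "(real^'n \<Rightarrow> real^'n \<Rightarrow> real^'n) \<Rightarrow> (real^'n^'n^'n) set" where
  "inv3 br = {w \<in> Lam3. \<forall>v. schouten_13 br v w = 0}"

text \<open>Annihilator of a subset of Lam^3: linear functionals vanishing on it
 (every functional on Lam^3 is the restriction of a linear functional on all tensors).\<close>
definition annihilator :: "(real^'n^'n^'n) set \<Rightarrow> (real^'n^'n^'n \<Rightarrow> real) set" where
  "annihilator S = {u. linear u \<and> (\<forall>w\<in>S. u w = 0)}"

definition r_matrices :: "(real^'n \<Rightarrow> real^'n \<Rightarrow> real^'n) \<Rightarrow> (real^'n^'n) set" where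
  "r_matrices br = {r \<in> Lam2. schouten_rr br r \<in> inv3 br}"

definition derivations :: "(real^'n \<Rightarrow> real^'n \<Rightarrow> real^'n) \<Rightarrow> (real^'n \<Rightarrow> real^'n) set" where
  "derivations br = {d. linear d \<and> (\<forall>x y. d (br x y) = br (d x) y + br x (d y))}"

text \<open>Lam^2 d (a\<and>b) = d a \<and> b + a \<and> d b, in coefficients.\<close>
definition wedge2 :: "(real^'n \<Rightarrow> real^'n) \<Rightarrow> real^'n^'n \<Rightarrow> real^'n^'n" where
  "wedge2 d r = (\<chi> i j. \<Sum>k\<in>UNIV. d (axis k 1) $ i * r$k$j + d (axis k 1) $ j * r$i$k)"

definition Vg :: "(real^'n \<Rightarrow> real^'n \<Rightarrow> real^'n) \<Rightarrow> (real^'n^'n \<Rightarrow> real^'n^'n) set" where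
  "Vg br = {(\<lambda>r. wedge2 d r) | d. d \<in> derivations br}"

fun Ck_on :: "nat \<Rightarrow> 'v::real_normed_vector set \<Rightarrow> ('v \<Rightarrow> real) \<Rightarrow> bool" where
  "Ck_on 0 M f = continuous_on M f"
| "Ck_on (Suc k) M f = (\<exists>f'. (\<forall>x\<in>M. (f has_derivative f' x) (at x within M)) \<and>
                              (\<forall>v\<in>M. Ck_on k M (\<lambda>x. f' x v)))"

definition smooth_on :: "'v::real_normed_vector set \<Rightarrow> ('v \<Rightarrow> real) \<Rightarrow> bool" where
  "smooth_on M f \<longleftrightarrow> (\<forall>k. Ck_on k M f)"

definition lie_deriv :: "('v::real_normed_vector \<Rightarrow> 'v) \<Rightarrow> ('v \<Rightarrow> real) \<Rightarrow> 'v \<Rightarrow> real" where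
  "lie_deriv X f x = deriv (\<lambda>t. f (x + t *\<^sub>R X x)) 0"

definition linear_darboux_family ::
  "'v::real_normed_vector set \<Rightarrow> ('v \<Rightarrow> 'v) set \<Rightarrow> ('v \<Rightarrow> real) set \<Rightarrow> bool" where
  "linear_darboux_family M V A \<longleftrightarrow> (\<exists>fs :: ('v \<Rightarrow> real) list.
      A = {(\<lambda>x. \<Sum>i<length fs. a i * (fs!i) x) | a. True} \<and>
      (\<forall>f\<in>set fs. smooth_on M f) \<and>
      (\<forall>X\<in>V. \<forall>j<length fs. \<exists>h :: nat \<Rightarrow> real.
          \<forall>x\<in>M. lie_deriv X (fs!j) x = (\<Sum>i<length fs. h i * (fs!i) x)))"

definition locus :: "'v set \<Rightarrow> ('v \<Rightarrow> real) set \<Rightarrow> 'v set" where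
  "locus M A = {x\<in>M. \<forall>f\<in>A. f x = 0}"

end

theory Submission
  imports Defs
begin

(* The bracket [r,r] is quadratic in r and equivariant under derivations: if d is a derivation,
   the induced action of d on trivectors sends [r,r] to [r, Lam2 d r] + [Lam2 d r, r], which is the
   derivative of r |-> [r,r] along the fundamental vector field of d.  Hence the Lie derivative of
   r |-> u([r,r]) along that field is r |-> (u o d)([r,r]).  Derivations preserve the invariant
   trivectors, because their commutator with ad v is ad (d v); so u o d annihilates them whenever
   u does, and a basis of the annihilator gives a linear Darboux family.  Its locus is the set where
   [r,r] lies in the double annihilator, i.e. in the invariant trivectors.  The subspace {0} in
   place of the invariant trivectors gives the statement about the classical Yang-Baxter
   equation. *)

section \<open>Quadratic functions\<close>

lemma bilinear_inner_comp:
  assumes "bilinear h"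
  shows "bilinear (\<lambda>x y. U \<bullet> h x y)"
  unfolding bilinear_def using assms
  by (auto intro!: linearI simp: bilinear_ladd bilinear_radd bilinear_lmul bilinear_rmul inner_add_right)

lemma has_derivative_quadratic:
  fixes q :: "'a::euclidean_space \<Rightarrow> 'a \<Rightarrow> real"
  assumes q: "bilinear q" and l: "linear l"
  shows "((\<lambda>x. c + l x + q x x) has_derivative (\<lambda>h. l h + (q x h + q h x))) (at x within M)"
proof -
  have "((\<lambda>x. q x x) has_derivative (\<lambda>h. q x h + q h x)) (at x within M)"
    using bounded_bilinear.FDERIV[OF bilinear_conv_bounded_bilinear[THEN iffD1, OF q]
        has_derivative_ident has_derivative_ident] .
  moreover have "(l has_derivative l) (at x within M)"
    using l by (simp add: linear_conv_bounded_linear bounded_linear_imp_has_derivative)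
  ultimately have "((\<lambda>x. c + l x + q x x) has_derivative (\<lambda>h. 0 + l h + (q x h + q h x))) (at x within M)"
    by (intro has_derivative_add has_derivative_const)
  then show ?thesis by simp
qed

text \<open>The derivative of a quadratic function is affine, so the induction runs over affine
  plus quadratic functions.\<close>

lemma Ck_on_quadratic:
  fixes q :: "'a::euclidean_space \<Rightarrow> 'a \<Rightarrow> real"
  assumes "bilinear q" "linear l"
  shows "Ck_on k M (\<lambda>x. c + l x + q x x)"
  using assms
proof (induction k arbitrary: c l q)
  case 0
  have "\<forall>x\<in>M. continuous (at x within M) (\<lambda>x. c + l x + q x x)"
    using has_derivative_quadratic[OF 0] has_derivative_continuous by blast
  then show ?case by (simp add: continuous_on_eq_continuous_within)
next
  case (Suc k)
  have "Ck_on k M (\<lambda>x. l v + (q x v + q v x))" for v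
  proof -
    have "linear (\<lambda>x. q x v + q v x)"
      using Suc.prems(1)
      by (auto intro!: linearI simp: bilinear_ladd bilinear_radd bilinear_lmul bilinear_rmul algebra_simps)
    moreover have "bilinear (\<lambda>(x::'a) (y::'a). 0::real)"
      unfolding bilinear_def by (auto intro!: linearI)
    ultimately show ?thesis using Suc.IH[of "\<lambda>x y. 0" "\<lambda>x. q x v + q v x" "l v"] by simp
  qed
  then show ?case
    using has_derivative_quadratic[OF Suc.prems] by (auto intro!: exI[of _ "\<lambda>x h. l h + (q x h + q h x)"])
qed

lemma smooth_on_quadratic:
  fixes q :: "'a::euclidean_space \<Rightarrow> 'a \<Rightarrow> real"
  assumes "bilinear q"
  shows "smooth_on M (\<lambda>x. q x x)"
  using Ck_on_quadratic[OF assms, of "\<lambda>x. 0" _ M 0] unfolding smooth_on_def by (simp add: linear_zero)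

lemma lie_deriv_quadratic:
  fixes q :: "'a::euclidean_space \<Rightarrow> 'a \<Rightarrow> real"
  assumes q: "bilinear q"
  shows "lie_deriv X (\<lambda>y. q y y) x = q x (X x) + q (X x) x"
proof -
  let ?v = "X x"
  have expand: "q (x + t *\<^sub>R ?v) (x + t *\<^sub>R ?v) = q x x + t * (q x ?v + q ?v x) + t^2 * q ?v ?v" for t
    using q by (simp add: bilinear_ladd bilinear_radd bilinear_lmul bilinear_rmul power2_eq_square algebra_simps)
  have "((\<lambda>t. q x x + t * (q x ?v + q ?v x) + t^2 * q ?v ?v) has_real_derivative (q x ?v + q ?v x)) (at 0)"
    by (auto intro!: derivative_eq_intros)
  then show ?thesis unfolding lie_deriv_def expand by (rule DERIV_imp_deriv)
qed

section \<open>Darboux families of linear functionals\<close>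

lemma subspace_list_combinations:
  fixes W :: "'a::euclidean_space set"
  assumes "subspace W"
  obtains bs where "set bs \<subseteq> W" and "\<And>U. U \<in> W \<longleftrightarrow> (\<exists>a. U = (\<Sum>i<length bs. a i *\<^sub>R bs!i))"
proof -
  obtain B where BW: "B \<subseteq> W" and iB: "independent B" and WB: "W \<subseteq> span B"
    by (rule basis_exists[of W])
  obtain bs where bs: "distinct bs" "set bs = B"
    using finite_distinct_list[OF finiteI_independent[OF iB]] by blast
  have span_B: "span B = W" using WB span_minimal[OF BW assms] by auto
  have "U \<in> W \<longleftrightarrow> (\<exists>a. U = (\<Sum>i<length bs. a i *\<^sub>R bs!i))" for U
  proof
    assume "U \<in> W"
    then obtain u where "U = (\<Sum>v\<in>B. u v *\<^sub>R v)"
      using span_B span_finite[OF finiteI_independent[OF iB]] by auto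
    also have "\<dots> = (\<Sum>i<length bs. u (bs!i) *\<^sub>R bs!i)"
      using sum.reindex_bij_betw[OF bij_betw_nth[OF bs(1) refl refl], of "\<lambda>v. u v *\<^sub>R v"] bs(2)
      by simp
    finally show "\<exists>a. U = (\<Sum>i<length bs. a i *\<^sub>R bs!i)" by (rule exI[where x="\<lambda>i. u (bs!i)"])
  next
    assume "\<exists>a. U = (\<Sum>i<length bs. a i *\<^sub>R bs!i)"
    then obtain a where U: "U = (\<Sum>i<length bs. a i *\<^sub>R bs!i)" ..
    have "a i *\<^sub>R bs!i \<in> span B" if "i < length bs" for i
      using that bs(2) nth_mem by (blast intro: span_base span_scale)
    then show "U \<in> W"
      unfolding U span_B[symmetric] by (rule span_sum) simp
  qed
  then show thesis using that BW bs by blast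
qed

lemma linear_darboux_family_inner:
  fixes S :: "'v::real_normed_vector \<Rightarrow> 'w::euclidean_space"
  assumes W: "subspace W"
    and smooth: "\<And>U. U \<in> W \<Longrightarrow> smooth_on M (\<lambda>x. U \<bullet> S x)"
    and cofactor: "\<And>X U. X \<in> V \<Longrightarrow> U \<in> W \<Longrightarrow>
      \<exists>U'\<in>W. \<forall>x\<in>M. lie_deriv X (\<lambda>x. U \<bullet> S x) x = U' \<bullet> S x"
  shows "linear_darboux_family M V {(\<lambda>x. U \<bullet> S x) | U. U \<in> W}"
proof -
  obtain bs where bsW: "set bs \<subseteq> W"
    and W_iff: "\<And>U. U \<in> W \<longleftrightarrow> (\<exists>a. U = (\<Sum>i<length bs. a i *\<^sub>R bs!i))"
    using subspace_list_combinations[OF W] by blast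
  define fs where "fs = map (\<lambda>U x. U \<bullet> S x) bs"
  have comb: "(\<lambda>x. \<Sum>i<length fs. a i * (fs!i) x) = (\<lambda>x. (\<Sum>i<length bs. a i *\<^sub>R bs!i) \<bullet> S x)" for a
    by (auto simp: fs_def inner_sum_left intro!: sum.cong)
  have "{(\<lambda>x. U \<bullet> S x) | U. U \<in> W} = {(\<lambda>x. \<Sum>i<length fs. a i * (fs!i) x) | a. True}"
    unfolding comb by (auto simp: W_iff)
  moreover have "\<forall>f\<in>set fs. smooth_on M f"
    using bsW smooth by (auto simp: fs_def)
  moreover have "\<exists>h. \<forall>x\<in>M. lie_deriv X (fs!j) x = (\<Sum>i<length fs. h i * (fs!i) x)"
    if X: "X \<in> V" and j: "j < length fs" for X j
  proof -
    have "bs!j \<in> W" using bsW j by (auto simp: fs_def)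
    then obtain U' where "U' \<in> W" and U': "\<forall>x\<in>M. lie_deriv X (fs!j) x = U' \<bullet> S x"
      using cofactor[OF X] j by (fastforce simp: fs_def)
    then obtain h where "U' = (\<Sum>i<length bs. h i *\<^sub>R bs!i)" using W_iff by blast
    then have "\<forall>x\<in>M. lie_deriv X (fs!j) x = (\<Sum>i<length fs. h i * (fs!i) x)"
      using U' comb[of h] by (simp add: fun_eq_iff)
    then show ?thesis by blast
  qed
  ultimately show ?thesis unfolding linear_darboux_family_def by blast
qed

lemma annihilator_family_eq_inner:
  "{(\<lambda>r. u (S r)) | u. u \<in> annihilator Z} = {(\<lambda>r. U \<bullet> S r) | U. U \<in> Z\<^sup>\<bottom>}"
proof (intro set_eqI iffI)
  fix f assume "f \<in> {(\<lambda>r. u (S r)) | u. u \<in> annihilator Z}"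
  then obtain u where f: "f = (\<lambda>r. u (S r))" and u: "linear u" "\<forall>w\<in>Z. u w = 0"
    unfolding annihilator_def by blast
  have u_eq: "u y = adjoint u 1 \<bullet> y" for y
    using adjoint_clauses(2)[OF u(1), of 1 y] by simp
  have "adjoint u 1 \<in> Z\<^sup>\<bottom>"
    using u(2) by (simp add: orthogonal_comp_def orthogonal_def adjoint_clauses(1)[OF u(1)])
  moreover have "f = (\<lambda>r. adjoint u 1 \<bullet> S r)"
    unfolding f by (rule ext) (rule u_eq)
  ultimately show "f \<in> {(\<lambda>r. U \<bullet> S r) | U. U \<in> Z\<^sup>\<bottom>}" by blast
next
  fix f assume "f \<in> {(\<lambda>r. U \<bullet> S r) | U. U \<in> Z\<^sup>\<bottom>}"
  then obtain U where "f = (\<lambda>r. U \<bullet> S r)" "U \<in> Z\<^sup>\<bottom>" by blast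
  moreover have "linear (\<lambda>y. U \<bullet> y)"
    by (rule bounded_linear.linear[OF bounded_linear_inner_right])
  ultimately show "f \<in> {(\<lambda>r. u (S r)) | u. u \<in> annihilator Z}"
    unfolding annihilator_def orthogonal_comp_def orthogonal_def by (auto simp: inner_commute)
qed

lemma locus_inner_family:
  fixes S :: "'a \<Rightarrow> 'w::euclidean_space"
  assumes "subspace Z"
  shows "locus M {(\<lambda>r. U \<bullet> S r) | U. U \<in> Z\<^sup>\<bottom>} = {x \<in> M. S x \<in> Z}"
proof (rule set_eqI)
  fix x
  have "x \<in> locus M {(\<lambda>r. U \<bullet> S r) | U. U \<in> Z\<^sup>\<bottom>} \<longleftrightarrow> x \<in> M \<and> (\<forall>U\<in>Z\<^sup>\<bottom>. U \<bullet> S x = 0)"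
    unfolding locus_def by auto
  also have "\<dots> \<longleftrightarrow> x \<in> M \<and> S x \<in> Z\<^sup>\<bottom>\<^sup>\<bottom>"
    by (auto simp: orthogonal_comp_def orthogonal_def)
  finally show "x \<in> locus M {(\<lambda>r. U \<bullet> S r) | U. U \<in> Z\<^sup>\<bottom>} \<longleftrightarrow> x \<in> {x \<in> M. S x \<in> Z}"
    unfolding orthogonal_comp_self[OF assms] by simp
qed

section \<open>Derivations acting on bivectors and trivectors\<close>

definition wedge2_mat :: "real^'n^'n \<Rightarrow> real^'n^'n \<Rightarrow> real^'n^'n" where
  "wedge2_mat M x = M ** x + x ** transpose M"

lemma wedge2_mat_component:
  "wedge2_mat M x $ i $ j = (\<Sum>k\<in>UNIV. M$i$k * x$k$j + M$j$k * x$i$k)"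
  by (simp add: wedge2_mat_def matrix_matrix_mult_def transpose_def sum.distrib mult.commute)

lemma wedge2_eq_wedge2_mat: "wedge2 d r = wedge2_mat (matrix d) r"
  by (simp add: vec_eq_iff wedge2_def wedge2_mat_component matrix_def)

definition wedge3_mat :: "real^'n^'n \<Rightarrow> real^'n^'n^'n \<Rightarrow> real^'n^'n^'n" where
  "wedge3_mat M w = (\<chi> a b c. \<Sum>e\<in>UNIV. M$a$e * w$e$b$c + M$b$e * w$a$e$c + M$c$e * w$a$b$e)"

lemma linear_wedge3_mat: "linear (wedge3_mat M)"
  by (rule linearI) (simp_all add: wedge3_mat_def vec_eq_iff sum.distrib sum_distrib_left algebra_simps)

lemma wedge3_mat_uminus: "wedge3_mat (- M) w = - wedge3_mat M w"
  by (simp add: wedge3_mat_def vec_eq_iff sum_negf[symmetric] algebra_simps)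

lemma wedge3_mat_Lam3:
  assumes "w \<in> Lam3"
  shows "wedge3_mat M w \<in> Lam3"
proof -
  have s1: "\<And>p q r. w$p$q$r = - w$q$p$r" and s2: "\<And>p q r. w$p$q$r = - w$p$r$q"
    using assms unfolding Lam3_def by blast+
  have "wedge3_mat M w $ a $ b $ c = - wedge3_mat M w $ b $ a $ c" for a b c
    unfolding wedge3_mat_def vec_lambda_beta sum_negf[symmetric]
  proof (rule sum.cong[OF refl])
    fix e
    show "M$a$e * w$e$b$c + M$b$e * w$a$e$c + M$c$e * w$a$b$e =
        - (M$b$e * w$e$a$c + M$a$e * w$b$e$c + M$c$e * w$b$a$e)"
      using s1[of e a c] s1[of b e c] s1[of b a e] by simp
  qed
  moreover have "wedge3_mat M w $ a $ b $ c = - wedge3_mat M w $ a $ c $ b" for a b c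
    unfolding wedge3_mat_def vec_lambda_beta sum_negf[symmetric]
  proof (rule sum.cong[OF refl])
    fix e
    show "M$a$e * w$e$b$c + M$b$e * w$a$e$c + M$c$e * w$a$b$e =
        - (M$a$e * w$e$c$b + M$c$e * w$a$e$b + M$b$e * w$a$c$e)"
      using s2[of e c b] s2[of a e b] s2[of a c e] by simp
  qed
  ultimately show ?thesis unfolding Lam3_def by blast
qed

lemma sum_mult_sum_swap:
  "(\<Sum>e\<in>UNIV. (A::'n::finite \<Rightarrow> real) e * (\<Sum>f\<in>UNIV. B f * w e f)) = (\<Sum>e\<in>UNIV. B e * (\<Sum>f\<in>UNIV. A f * w f e))"
  by (simp only: sum_distrib_left, subst sum.swap) (simp add: mult_ac)

lemma sum_mult_sum_assoc:
  "(\<Sum>e\<in>UNIV. (A::'n::finite \<Rightarrow> real) e * (\<Sum>f\<in>UNIV. M e f * w f)) = (\<Sum>f\<in>UNIV. (\<Sum>e\<in>UNIV. A e * M e f) * w f)"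
  by (simp only: sum_distrib_left sum_distrib_right, subst sum.swap) (simp add: mult_ac)

lemma wedge3_mat_commutator:
  "wedge3_mat A (wedge3_mat M w) = wedge3_mat M (wedge3_mat A w) + wedge3_mat (A ** M - M ** A) w"
proof -
  have "wedge3_mat A (wedge3_mat M w) $ a $ b $ c
      = (wedge3_mat M (wedge3_mat A w) + wedge3_mat (A ** M - M ** A) w) $ a $ b $ c" for a b c
    unfolding wedge3_mat_def matrix_matrix_mult_def
    using sum_mult_sum_swap[of "\<lambda>e. A$a$e" "\<lambda>e. M$b$e" "\<lambda>e f. w$e$f$c"]
      sum_mult_sum_swap[of "\<lambda>e. A$a$e" "\<lambda>e. M$c$e" "\<lambda>e f. w$e$b$f"]
      sum_mult_sum_swap[of "\<lambda>e. A$b$e" "\<lambda>e. M$a$e" "\<lambda>e f. w$f$e$c"]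
      sum_mult_sum_swap[of "\<lambda>e. A$b$e" "\<lambda>e. M$c$e" "\<lambda>e f. w$a$e$f"]
      sum_mult_sum_swap[of "\<lambda>e. A$c$e" "\<lambda>e. M$a$e" "\<lambda>e f. w$f$b$e"]
      sum_mult_sum_swap[of "\<lambda>e. A$c$e" "\<lambda>e. M$b$e" "\<lambda>e f. w$a$f$e"]
      sum_mult_sum_assoc[of "\<lambda>e. A$a$e" "\<lambda>e f. M$e$f" "\<lambda>f. w$f$b$c"]
      sum_mult_sum_assoc[of "\<lambda>e. A$b$e" "\<lambda>e f. M$e$f" "\<lambda>f. w$a$f$c"]
      sum_mult_sum_assoc[of "\<lambda>e. A$c$e" "\<lambda>e f. M$e$f" "\<lambda>f. w$a$b$f"]
      sum_mult_sum_assoc[of "\<lambda>e. M$a$e" "\<lambda>e f. A$e$f" "\<lambda>f. w$f$b$c"]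
      sum_mult_sum_assoc[of "\<lambda>e. M$b$e" "\<lambda>e f. A$e$f" "\<lambda>f. w$a$f$c"]
      sum_mult_sum_assoc[of "\<lambda>e. M$c$e" "\<lambda>e f. A$e$f" "\<lambda>f. w$a$b$f"]
    by (simp add: sum.distrib sum_subtractf distrib_left left_diff_distrib)
  then show ?thesis by (simp add: vec_eq_iff)
qed

text \<open>\<open>M [e\<^sub>i, e\<^sub>k] = [M e\<^sub>i, e\<^sub>k] + [e\<^sub>i, M e\<^sub>k]\<close> for the algebra with structure
  constants \<open>c\<close>.\<close>

definition derivation_matrix :: "('n \<Rightarrow> 'n \<Rightarrow> 'n \<Rightarrow> real) \<Rightarrow> real^'n^'n \<Rightarrow> bool" where
  "derivation_matrix c M \<longleftrightarrow> (\<forall>i k m.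
     (\<Sum>p\<in>UNIV. M$m$p * c i k p) = (\<Sum>p\<in>UNIV. M$p$i * c p k m) + (\<Sum>p\<in>UNIV. M$p$k * c i p m))"

lemma linear_component_matrix:
  fixes f :: "real^'n \<Rightarrow> real^'m"
  assumes "linear f"
  shows "f x $ i = (\<Sum>k\<in>UNIV. matrix f $ i $ k * x $ k)"
proof -
  have "f x = matrix f *v x" using fun_cong[OF matrix_vector_mul(2)[OF assms]] by simp
  then show ?thesis by (simp add: matrix_vector_mult_def)
qed

lemma derivation_matrix_sc:
  assumes br: "bilinear br" and d: "d \<in> derivations br"
  shows "derivation_matrix (sc br) (matrix d)"
proof -
  have ld: "linear d" and dd: "\<And>x y. d (br x y) = br (d x) y + br x (d y)"
    using d unfolding derivations_def by auto
  have l1: "linear (\<lambda>x. br x y)" and l2: "linear (br x)" for x y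
    using br unfolding bilinear_def by auto
  have "(\<Sum>p\<in>UNIV. matrix d $ m $ p * sc br i k p)
      = (\<Sum>p\<in>UNIV. matrix d $ p $ i * sc br p k m) + (\<Sum>p\<in>UNIV. matrix d $ p $ k * sc br i p m)"
    for i k m
  proof -
    have "(\<Sum>p\<in>UNIV. matrix d $ m $ p * sc br i k p) = d (br (axis i 1) (axis k 1)) $ m"
      unfolding sc_def using linear_component_matrix[OF ld] by simp
    also have "\<dots> = br (d (axis i 1)) (axis k 1) $ m + br (axis i 1) (d (axis k 1)) $ m"
      by (simp add: dd)
    also have "br (d (axis i 1)) (axis k 1) $ m = (\<Sum>p\<in>UNIV. matrix d $ p $ i * sc br p k m)"
      using linear_component_matrix[OF l1[of "axis k 1"], of "d (axis i 1)" m]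
      unfolding matrix_def sc_def by (simp add: mult.commute)
    also have "br (axis i 1) (d (axis k 1)) $ m = (\<Sum>p\<in>UNIV. matrix d $ p $ k * sc br i p m)"
      using linear_component_matrix[OF l2[of "axis i 1"], of "d (axis k 1)" m]
      unfolding matrix_def sc_def by (simp add: mult.commute)
    finally show ?thesis .
  qed
  then show ?thesis unfolding derivation_matrix_def by blast
qed

lemma matrix_ad_derivation_commutator:
  assumes br: "bilinear br" and d: "d \<in> derivations br"
  shows "matrix (br v) ** matrix d - matrix d ** matrix (br v) = - matrix (br (d v))"
proof -
  have ld: "linear d" and dd: "\<And>x y. d (br x y) = br (d x) y + br x (d y)"
    using d unfolding derivations_def by auto
  have l2: "linear (br v)" using br unfolding bilinear_def by auto
  have "matrix (br v) ** matrix d - matrix d ** matrix (br v) = matrix (br v \<circ> d) - matrix (d \<circ> br v)"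
    by (simp add: matrix_compose ld l2)
  also have "\<dots> = - matrix (br (d v))"
    by (simp add: vec_eq_iff matrix_def dd)
  finally show ?thesis .
qed

section \<open>Equivariance of the Schouten bracket\<close>

definition schouten_polar_pre ::
    "('n \<Rightarrow> 'n \<Rightarrow> 'n \<Rightarrow> real) \<Rightarrow> real^'n^'n \<Rightarrow> real^'n^'n \<Rightarrow> 'n \<Rightarrow> 'n \<Rightarrow> 'n \<Rightarrow> real" where
  "schouten_polar_pre c x y m j l = (\<Sum>i\<in>UNIV. \<Sum>k\<in>UNIV. c i k m * x$i$j * y$k$l)"

definition schouten_polar ::
    "('n \<Rightarrow> 'n \<Rightarrow> 'n \<Rightarrow> real) \<Rightarrow> real^'n^'n \<Rightarrow> real^'n^'n \<Rightarrow> real^'n^'n^'n" where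
  "schouten_polar c x y = (\<chi> a b e. schouten_polar_pre c x y a b e - schouten_polar_pre c x y b a e
      - schouten_polar_pre c x y a e b - schouten_polar_pre c x y e b a
      + schouten_polar_pre c x y b e a + schouten_polar_pre c x y e a b)"

lemma schouten_rr_eq_polar: "schouten_rr br r = schouten_polar (sc br) r r"
  by (simp add: schouten_rr_def schouten_polar_def schouten_polar_pre_def schouten_pre_def)

lemma bilinear_schouten_polar: "bilinear (schouten_polar c)"
  unfolding bilinear_def
proof (intro conjI allI)
  fix x y
  show "linear (\<lambda>y. schouten_polar c x y)"
    by (rule linearI) (simp_all add: schouten_polar_def schouten_polar_pre_def vec_eq_iff sum.distrib
        distrib_left sum_distrib_left algebra_simps)
  show "linear (\<lambda>x. schouten_polar c x y)"
    by (rule linearI) (simp_all add: schouten_polar_def schouten_polar_pre_def vec_eq_iff sum.distrib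
        distrib_left distrib_right sum_distrib_left algebra_simps)
qed

lemma derivation_matrix_schouten_polar_pre:
  fixes M :: "real^'n::finite^'n"
  assumes "derivation_matrix c M"
  shows "(\<Sum>e\<in>UNIV. M$m$e * schouten_polar_pre c x x e j l + M$j$e * schouten_polar_pre c x x m e l
                    + M$l$e * schouten_polar_pre c x x m j e)
       = schouten_polar_pre c x (wedge2_mat M x) m j l + schouten_polar_pre c (wedge2_mat M x) x m j l"
proof -
  let ?P = "schouten_polar_pre c x x"
  define A where "A = (\<Sum>i\<in>UNIV. \<Sum>k\<in>UNIV. (\<Sum>p\<in>UNIV. M$p$i * c p k m) * x$i$j * x$k$l)"
  define B where "B = (\<Sum>i\<in>UNIV. \<Sum>k\<in>UNIV. (\<Sum>p\<in>UNIV. M$p$k * c i p m) * x$i$j * x$k$l)"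
  \<comment> \<open>The derivation identity splits the first sum into \<open>A + B\<close>; each polarized term
    contributes one of \<open>A\<close>, \<open>B\<close> together with one of the remaining two sums.\<close>
  have "(\<Sum>e\<in>UNIV. M$m$e * ?P e j l) = (\<Sum>i\<in>UNIV. \<Sum>k\<in>UNIV. (\<Sum>e\<in>UNIV. M$m$e * c i k e) * x$i$j * x$k$l)"
    unfolding schouten_polar_pre_def sum_distrib_left sum_distrib_right
    by (subst sum.swap) (rule sum.cong[OF refl], subst sum.swap, simp add: mult_ac)
  also have "\<dots> = A + B"
    using assms unfolding derivation_matrix_def A_def B_def by (simp add: sum.distrib distrib_right)
  finally have first: "(\<Sum>e\<in>UNIV. M$m$e * ?P e j l) = A + B" .
  have "schouten_polar_pre c x (wedge2_mat M x) m j l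
      = (\<Sum>i\<in>UNIV. \<Sum>k\<in>UNIV. \<Sum>e\<in>UNIV. c i k m * x$i$j * (M$k$e * x$e$l))
      + (\<Sum>i\<in>UNIV. \<Sum>k\<in>UNIV. \<Sum>e\<in>UNIV. c i k m * x$i$j * (M$l$e * x$k$e))"
    unfolding schouten_polar_pre_def wedge2_mat_component
    by (simp add: sum_distrib_left distrib_left sum.distrib)
  also have "(\<Sum>i\<in>UNIV. \<Sum>k\<in>UNIV. \<Sum>e\<in>UNIV. c i k m * x$i$j * (M$k$e * x$e$l)) = B"
    unfolding B_def sum_distrib_right
    by (rule sum.cong[OF refl], subst sum.swap) (simp add: mult_ac)
  also have "(\<Sum>i\<in>UNIV. \<Sum>k\<in>UNIV. \<Sum>e\<in>UNIV. c i k m * x$i$j * (M$l$e * x$k$e)) = (\<Sum>e\<in>UNIV. M$l$e * ?P m j e)"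
    unfolding schouten_polar_pre_def
    by (simp add: sum_distrib_left mult_ac, subst (2) sum.swap, subst sum.swap, simp add: mult_ac)
  finally have right: "schouten_polar_pre c x (wedge2_mat M x) m j l = B + (\<Sum>e\<in>UNIV. M$l$e * ?P m j e)" .
  have "schouten_polar_pre c (wedge2_mat M x) x m j l
      = (\<Sum>i\<in>UNIV. \<Sum>k\<in>UNIV. \<Sum>e\<in>UNIV. c i k m * (M$i$e * x$e$j) * x$k$l)
      + (\<Sum>i\<in>UNIV. \<Sum>k\<in>UNIV. \<Sum>e\<in>UNIV. c i k m * (M$j$e * x$i$e) * x$k$l)"
    unfolding schouten_polar_pre_def wedge2_mat_component
    by (simp add: sum_distrib_left sum_distrib_right distrib_left distrib_right sum.distrib)
  also have "(\<Sum>i\<in>UNIV. \<Sum>k\<in>UNIV. \<Sum>e\<in>UNIV. c i k m * (M$i$e * x$e$j) * x$k$l) = A"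
    unfolding A_def sum_distrib_right
    by (subst sum.swap, rule trans, rule sum.cong[OF refl], rule sum.swap, subst sum.swap) (simp add: mult_ac)
  also have "(\<Sum>i\<in>UNIV. \<Sum>k\<in>UNIV. \<Sum>e\<in>UNIV. c i k m * (M$j$e * x$i$e) * x$k$l) = (\<Sum>e\<in>UNIV. M$j$e * ?P m e l)"
    unfolding schouten_polar_pre_def
    by (simp add: sum_distrib_left mult_ac, subst (2) sum.swap, subst sum.swap, simp add: mult_ac)
  finally have left: "schouten_polar_pre c (wedge2_mat M x) x m j l = A + (\<Sum>e\<in>UNIV. M$j$e * ?P m e l)" .
  show ?thesis using first right left by (simp add: sum.distrib)
qed

lemma wedge3_mat_schouten_polar:
  fixes M :: "real^'n::finite^'n"
  assumes "derivation_matrix c M"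
  shows "wedge3_mat M (schouten_polar c x x)
       = schouten_polar c x (wedge2_mat M x) + schouten_polar c (wedge2_mat M x) x"
proof -
  note D = derivation_matrix_schouten_polar_pre[OF assms, unfolded sum.distrib]
  have "wedge3_mat M (schouten_polar c x x) $ a $ b $ e
      = (schouten_polar c x (wedge2_mat M x) + schouten_polar c (wedge2_mat M x) x) $ a $ b $ e" for a b e
    unfolding wedge3_mat_def schouten_polar_def
    using D[where x=x and m=a and j=b and l=e] D[where x=x and m=b and j=a and l=e]
      D[where x=x and m=a and j=e and l=b] D[where x=x and m=e and j=b and l=a]
      D[where x=x and m=b and j=e and l=a] D[where x=x and m=e and j=a and l=b]
    by (simp add: sum.distrib sum_subtractf distrib_left right_diff_distrib)
  then show ?thesis by (simp add: vec_eq_iff)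
qed

lemma schouten_13_eq_wedge3_mat: "schouten_13 br v w = wedge3_mat (matrix (br v)) w"
  by (simp add: schouten_13_def wedge3_mat_def matrix_def)

lemma wedge3_mat_derivation_inv3:
  assumes br: "bilinear br" and d: "d \<in> derivations br" and w: "w \<in> inv3 br"
  shows "wedge3_mat (matrix d) w \<in> inv3 br"
proof -
  have w_Lam3: "w \<in> Lam3" and w_inv: "\<And>v. wedge3_mat (matrix (br v)) w = 0"
    using w unfolding inv3_def schouten_13_eq_wedge3_mat by auto
  have "wedge3_mat (matrix (br v)) (wedge3_mat (matrix d) w) = 0" for v
  proof -
    have "wedge3_mat (matrix (br v)) (wedge3_mat (matrix d) w)
        = wedge3_mat (matrix d) (wedge3_mat (matrix (br v)) w) - wedge3_mat (matrix (br (d v))) w"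
      using wedge3_mat_commutator[of "matrix (br v)" "matrix d" w]
      unfolding matrix_ad_derivation_commutator[OF br d] wedge3_mat_uminus by simp
    then show ?thesis using w_inv by (simp add: linear_0[OF linear_wedge3_mat])
  qed
  then show ?thesis
    using wedge3_mat_Lam3[OF w_Lam3] unfolding inv3_def schouten_13_eq_wedge3_mat by auto
qed

lemma subspace_Lam3: "subspace Lam3"
proof -
  have "(x + y)$a$b$e = - (x + y)$b$a$e \<and> (x + y)$a$b$e = - (x + y)$a$e$b"
    and "(t *\<^sub>R x)$a$b$e = - (t *\<^sub>R x)$b$a$e \<and> (t *\<^sub>R x)$a$b$e = - (t *\<^sub>R x)$a$e$b"
    if "x \<in> Lam3" "y \<in> Lam3" for x y t a b e
  proof -
    have "x$a$b$e = - x$b$a$e" "x$a$b$e = - x$a$e$b" "y$a$b$e = - y$b$a$e" "y$a$b$e = - y$a$e$b"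
      using that unfolding Lam3_def by blast+
    then show "(x + y)$a$b$e = - (x + y)$b$a$e \<and> (x + y)$a$b$e = - (x + y)$a$e$b"
      and "(t *\<^sub>R x)$a$b$e = - (t *\<^sub>R x)$b$a$e \<and> (t *\<^sub>R x)$a$b$e = - (t *\<^sub>R x)$a$e$b"
      by simp_all
  qed
  then have "x + y \<in> Lam3" and "t *\<^sub>R x \<in> Lam3" if "x \<in> Lam3" "y \<in> Lam3" for x y t
    using that unfolding Lam3_def mem_Collect_eq by blast+
  moreover have "0 \<in> Lam3" by (simp add: Lam3_def)
  ultimately show ?thesis unfolding subspace_def by blast
qed

lemma subspace_inv3: "subspace (inv3 br)"
proof -
  have "inv3 br = Lam3 \<inter> (\<Inter>v. {w. wedge3_mat (matrix (br v)) w = 0})"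
    unfolding inv3_def schouten_13_eq_wedge3_mat by auto
  then show ?thesis
    using subspace_Lam3 linear_subspace_kernel[OF linear_wedge3_mat]
    by (auto intro!: subspace_inter subspace_Inter)
qed

lemma lie_deriv_schouten_rr:
  assumes "bilinear br" and "d \<in> derivations br"
  shows "lie_deriv (wedge2 d) (\<lambda>r. U \<bullet> schouten_rr br r) r
       = adjoint (wedge3_mat (matrix d)) U \<bullet> schouten_rr br r"
proof -
  have "lie_deriv (wedge2 d) (\<lambda>r. U \<bullet> schouten_rr br r) r
      = U \<bullet> (schouten_polar (sc br) r (wedge2 d r) + schouten_polar (sc br) (wedge2 d r) r)"
    unfolding schouten_rr_eq_polar
    using lie_deriv_quadratic[OF bilinear_inner_comp[OF bilinear_schouten_polar]]
    by (simp add: inner_add_right)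
  also have "\<dots> = U \<bullet> wedge3_mat (matrix d) (schouten_rr br r)"
    unfolding schouten_rr_eq_polar wedge2_eq_wedge2_mat
    using wedge3_mat_schouten_polar[OF derivation_matrix_sc[OF assms]] by simp
  also have "\<dots> = adjoint (wedge3_mat (matrix d)) U \<bullet> schouten_rr br r"
    by (simp add: adjoint_clauses(2)[OF linear_wedge3_mat])
  finally show ?thesis .
qed

lemma linear_darboux_family_schouten_rr:
  assumes br: "bilinear br"
    and Z_inv: "\<And>d w. d \<in> derivations br \<Longrightarrow> w \<in> Z \<Longrightarrow> wedge3_mat (matrix d) w \<in> Z"
  shows "linear_darboux_family Lam2 (Vg br) {(\<lambda>r. U \<bullet> schouten_rr br r) | U. U \<in> Z\<^sup>\<bottom>}"
proof (rule linear_darboux_family_inner[OF subspace_orthogonal_comp])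
  show "smooth_on Lam2 (\<lambda>r. U \<bullet> schouten_rr br r)" for U
    unfolding schouten_rr_eq_polar
    by (rule smooth_on_quadratic[OF bilinear_inner_comp[OF bilinear_schouten_polar]])
next
  fix X U assume "X \<in> Vg br" and U: "U \<in> Z\<^sup>\<bottom>"
  then obtain d where d: "d \<in> derivations br" and X: "X = wedge2 d"
    unfolding Vg_def by auto
  have "adjoint (wedge3_mat (matrix d)) U \<in> Z\<^sup>\<bottom>"
    using U Z_inv[OF d]
    by (simp add: orthogonal_comp_def orthogonal_def adjoint_clauses(1)[OF linear_wedge3_mat])
  then show "\<exists>U'\<in>Z\<^sup>\<bottom>. \<forall>r\<in>Lam2. lie_deriv X (\<lambda>r. U \<bullet> schouten_rr br r) r = U' \<bullet> schouten_rr br r"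
    unfolding X using lie_deriv_schouten_rr[OF br d] by blast
qed

theorem proposition5p3:
  fixes br :: "real^'n \<Rightarrow> real^'n \<Rightarrow> real^'n"
  assumes "lie_algebra br"
  shows "linear_darboux_family Lam2 (Vg br)
           {(\<lambda>r. u (schouten_rr br r)) | u. u \<in> annihilator (inv3 br)}
       \<and> locus Lam2 {(\<lambda>r. u (schouten_rr br r)) | u. u \<in> annihilator (inv3 br)} = r_matrices br
       \<and> linear_darboux_family Lam2 (Vg br)
           {(\<lambda>r. \<xi> (schouten_rr br r)) | \<xi>. linear \<xi>}
       \<and> locus Lam2 {(\<lambda>r. \<xi> (schouten_rr br r)) | \<xi>. linear \<xi>} = {r \<in> Lam2. schouten_rr br r = 0}"
proof -
  have br: "bilinear br" using assms unfolding lie_algebra_def by blast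
  have all_linear: "{(\<lambda>r. \<xi> (schouten_rr br r)) | \<xi>. linear \<xi>}
      = {(\<lambda>r. u (schouten_rr br r)) | u. u \<in> annihilator {0}}"
    unfolding annihilator_def by (auto simp: linear_0)
  have "linear_darboux_family Lam2 (Vg br) {(\<lambda>r. U \<bullet> schouten_rr br r) | U. U \<in> (inv3 br)\<^sup>\<bottom>}"
    using linear_darboux_family_schouten_rr[OF br wedge3_mat_derivation_inv3[OF br]] .
  moreover have "linear_darboux_family Lam2 (Vg br) {(\<lambda>r. U \<bullet> schouten_rr br r) | U. U \<in> {0}\<^sup>\<bottom>}"
    by (rule linear_darboux_family_schouten_rr[OF br]) (simp add: linear_0[OF linear_wedge3_mat])
  moreover have "locus Lam2 {(\<lambda>r. U \<bullet> schouten_rr br r) | U. U \<in> (inv3 br)\<^sup>\<bottom>} = r_matrices br"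
    unfolding locus_inner_family[OF subspace_inv3] r_matrices_def ..
  moreover have "locus Lam2 {(\<lambda>r. U \<bullet> schouten_rr br r) | U. U \<in> {0}\<^sup>\<bottom>} = {r \<in> Lam2. schouten_rr br r = 0}"
    using locus_inner_family[OF subspace_single_0] by simp
  ultimately show ?thesis unfolding all_linear annihilator_family_eq_inner by blast
qed

end
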